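(* Let $G$ be a finite simple graph on a vertex set $V$ with $|V|=n\ge2$, and let $k\ge1$. Let $\mathscr A=\{I(K_n\setminus e)\}^{*\infty}\cup\{I(K_n)\}$ (graphs on $V$), and let $\mathscr W_k=\mathscr A+\dots+\mathscr A+\{I(K_n)\}$ with $k-1$ summands $\mathscr A$ (so $\mathscr W_1=\{I(K_n)\}$). Then $G$ has a proper edge colouring with $k$ colours if and only if there exists $H\in\{I(G)\}*\mathscr W_k$ such that for every $a\in\{1,\dots,k\}$ every element of $s(\{I(U_a(H))\}*\{I(K_{1,n-1})\})$ is at most $1$.
   Context: Take $R=\mathbb{Z}$ (or $\mathbb R$). An $R$-weighted complete graph $K$ is a finite vertex set with a weight $v_K(e)\in R$ on every 2-subset $e$. For such $H,G'$ with equal vertex counts and a bijection $f:V(H)\to V(G')$, $H*_fG'$ has vertex set $V(H)$ and weights $v_H(\{x,y\})v_{G'}(\{f(x),f(y)\})$; $H*G'=\{H*_fG': f \text{ bijection}\}$, and for sets $\mathscr H*\mathscr G=\bigcup_{H\in\mathscr H,G'\in\mathscr G}H*G'$. $s(K)=\sum_e v_K(e)$, $s(\mathscr K)=\{s(K):K\in\mathscr K\}$. For weighted complete graphs $H_1,H_2$ on the same vertex set, $H_1+H_2$ has weights $v_{H_1}+v_{H_2}$; for sets on a common vertex set, $\mathscr H_1+\mathscr H_2=\{H_1+H_2\}$. For a set $\mathscr X$, $\mathscr X^{*1}=\mathscr X$, $\mathscr X^{*(m+1)}=\mathscr X^{*m}*\mathscr X$; if there is $N$ with $\mathscr X^{*m}=\mathscr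 X^{*N}$ for all $m\ge N$, then $\mathscr X^{*\infty}:=\mathscr X^{*N}$ (this exists for $\mathscr X=\{I(K_n\setminus e)\}$). $K_n\setminus e$ is the complete graph on $V$ with one edge removed. For a simple graph $G$, $I(G)$ has weight $1$ on edges and $0$ on non-edges. For $a\in R$ and a weighted complete graph $H$, $U_a(H)$ is the unweighted graph on $V(H)$ whose edges are the pairs $e$ with $v_H(e)=a$. *)

theory Defs
  imports Main
begin

text \<open>Weighted complete graphs on a fixed finite vertex set V are represented as
  functions from 2-subsets of V to int, normalised to 0 outside the 2-subsets of V.\<close>

type_synonym 'a wgraph = "'a set \<Rightarrow> int"

definition edges2 :: "'a set \<Rightarrow> 'a set set" where
  "edges2 V = {e. e \<subseteq> V \<and> card e = 2}"

definition indic :: "'a set \<Rightarrow> 'a set set \<Rightarrow> 'a wgraph" where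
  "indic V E = (\<lambda>e. if e \<in> edges2 V \<and> e \<in> E then 1 else 0)"

definition wstar :: "'a set \<Rightarrow> ('a \<Rightarrow> 'a) \<Rightarrow> 'a wgraph \<Rightarrow> 'a wgraph \<Rightarrow> 'a wgraph" where
  "wstar V f H G = (\<lambda>e. if e \<in> edges2 V then H e * G (f ` e) else 0)"

definition wstar_set :: "'a set \<Rightarrow> 'a wgraph set \<Rightarrow> 'a wgraph set \<Rightarrow> 'a wgraph set" where
  "wstar_set V HH GG = {wstar V f H G | f H G. H \<in> HH \<and> G \<in> GG \<and> bij_betw f V V}"

definition wplus_set :: "'a set \<Rightarrow> 'a wgraph set \<Rightarrow> 'a wgraph set \<Rightarrow> 'a wgraph set" where
  "wplus_set V HH GG = {(\<lambda>e. H e + G e) | H G. H \<in> HH \<and> G \<in> GG}"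

definition wsum :: "'a set \<Rightarrow> 'a wgraph \<Rightarrow> int" where
  "wsum V K = (\<Sum>e\<in>edges2 V. K e)"

text \<open>wpow V X m is X^{*(m+1)}\<close>
fun wpow :: "'a set \<Rightarrow> 'a wgraph set \<Rightarrow> nat \<Rightarrow> 'a wgraph set" where
  "wpow V X 0 = X"
| "wpow V X (Suc m) = wstar_set V (wpow V X m) X"

definition wpow_inf :: "'a set \<Rightarrow> 'a wgraph set \<Rightarrow> 'a wgraph set" where
  "wpow_inf V X = (THE Y. \<exists>N. Y = wpow V X N \<and> (\<forall>m\<ge>N. wpow V X m = wpow V X N))"

definition U :: "'a set \<Rightarrow> int \<Rightarrow> 'a wgraph \<Rightarrow> 'a set set" where
  "U V a H = {e \<in> edges2 V. H e = a}"

definition star_edges :: "'a set \<Rightarrow> 'a \<Rightarrow> 'a set set" where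
  "star_edges V c = {{c, v} | v. v \<in> V \<and> v \<noteq> c}"

text \<open>W_k = A + ... + A + {I(K_n)} with k-1 summands A: Wk V A (k-1)\<close>
fun Wk :: "'a set \<Rightarrow> 'a wgraph set \<Rightarrow> nat \<Rightarrow> 'a wgraph set" where
  "Wk V A 0 = {indic V (edges2 V)}"
| "Wk V A (Suc m) = wplus_set V A (Wk V A m)"

definition proper_edge_colouring :: "'a set set \<Rightarrow> nat \<Rightarrow> ('a set \<Rightarrow> nat) \<Rightarrow> bool" where
  "proper_edge_colouring E k col \<longleftrightarrow>
     (\<forall>e\<in>E. col e \<in> {1..k}) \<and>
     (\<forall>e1\<in>E. \<forall>e2\<in>E. e1 \<noteq> e2 \<and> e1 \<inter> e2 \<noteq> {} \<longrightarrow> col e1 \<noteq> col e2)"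

end

theory Submission
  imports Defs "HOL-Combinatorics.Permutations"
begin

text \<open>A bijection of V can move any edge onto e0, so the powers of I(K_n \<setminus> e0) are exactly
  the indicators of K_n minus an edge set containing e0. Hence every member of W_k takes values
  in 1..k, and, peeling off one layer at a time, every such weighting that gives e0 weight 1 is a
  member. Since colours can be permuted, a proper k-colouring can be arranged to give e0 colour 1
  and then becomes such a weighting. On the other side, the star product of I(U_a(H)) with
  I(K_{1,n-1}) under a bijection sending u to the centre counts the edges of U_a(H) at u, so the
  condition says precisely that every weight class U_a(H) is a matching.\<close>

lemma finite_edges2: "finite V \<Longrightarrow> finite (edges2 V)"
  unfolding edges2_def by (rule finite_subset[of _ "Pow V"]) auto

lemma bij_betw_image_edges2:
  assumes "bij_betw f V V" "e \<in> edges2 V"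
  shows "f ` e \<in> edges2 V"
proof -
  have eV: "e \<subseteq> V" and "card e = 2" using assms(2) by (auto simp: edges2_def)
  moreover have "inj_on f e" using bij_betw_imp_inj_on[OF assms(1)] eV by (rule inj_on_subset)
  moreover have "f ` e \<subseteq> V" using eV bij_betw_imp_surj_on[OF assms(1)] by blast
  ultimately show ?thesis by (simp add: edges2_def card_image)
qed

lemma permutes_edges2_to_edge:
  assumes "e \<in> edges2 V" "e' \<in> edges2 V"
  obtains f where "f permutes V" "f ` e = e'"
proof -
  obtain a b where e: "e = {a, b}" "a \<noteq> b" "a \<in> V" "b \<in> V"
    using assms(1) by (auto simp: edges2_def card_2_iff)
  obtain c d where e': "e' = {c, d}" "c \<noteq> d" "c \<in> V" "d \<in> V"
    using assms(2) by (auto simp: edges2_def card_2_iff)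
  define g where "g = transpose a c"
  define h where "h = transpose (g b) d"
  have g: "g permutes V" unfolding g_def using e e' by (simp add: permutes_swap_id)
  then have h: "h permutes V" unfolding h_def using e e' by (simp add: permutes_swap_id permutes_in_image)
  have "g b \<noteq> c" using e unfolding g_def by (auto simp: transpose_def)
  then have "(h \<circ> g) ` e = e'" using e e' unfolding g_def h_def by (auto simp: transpose_def)
  with permutes_compose[OF g h] show ?thesis by (rule that)
qed

lemma wstar_indic_complements:
  assumes "bij_betw f V V"
  shows "wstar V f (indic V (edges2 V - F)) (indic V (edges2 V - {e0}))
       = indic V (edges2 V - (F \<union> {e \<in> edges2 V. f ` e = e0}))"
proof
  fix e
  show "wstar V f (indic V (edges2 V - F)) (indic V (edges2 V - {e0})) e
      = indic V (edges2 V - (F \<union> {e \<in> edges2 V. f ` e = e0})) e"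
    using bij_betw_image_edges2[OF assms, of e] by (auto simp: wstar_def indic_def)
qed

lemma card_edges2_preimage_le_1:
  assumes "bij_betw f V V"
  shows "card {e \<in> edges2 V. f ` e = e0} \<le> 1"
proof -
  have "inj_on ((`) f) (Pow V)" using assms by (simp add: bij_betw_def inj_on_image_Pow)
  then have "a = b" if "a \<in> edges2 V" "b \<in> edges2 V" "f ` a = e0" "f ` b = e0" for a b
    using that by (auto simp: edges2_def dest: inj_onD)
  then show ?thesis
    by (cases "finite {e \<in> edges2 V. f ` e = e0}") (auto simp: card_le_Suc0_iff_eq)
qed

definition edge_deletions :: "'a set \<Rightarrow> 'a set \<Rightarrow> nat \<Rightarrow> 'a wgraph set" where
  "edge_deletions V e0 m = {indic V (edges2 V - F) | F. e0 \<in> F \<and> F \<subseteq> edges2 V \<and> card F \<le> m}"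

lemma edge_deletions_1:
  assumes "finite V" "e0 \<in> edges2 V"
  shows "edge_deletions V e0 1 = {indic V (edges2 V - {e0})}"
proof -
  have "F = {e0}" if "e0 \<in> F" "F \<subseteq> edges2 V" "card F \<le> 1" for F
    using that finite_subset[OF that(2) finite_edges2[OF assms(1)]]
    by (auto simp: card_le_Suc0_iff_eq)
  then show ?thesis using assms(2) by (auto simp: edge_deletions_def)
qed

lemma wstar_set_edge_deletions:
  assumes "finite V" "e0 \<in> edges2 V" "m \<ge> 1"
  shows "wstar_set V (edge_deletions V e0 m) {indic V (edges2 V - {e0})} = edge_deletions V e0 (Suc m)"
proof (intro equalityI subsetI)
  fix x assume "x \<in> wstar_set V (edge_deletions V e0 m) {indic V (edges2 V - {e0})}"
  then obtain f F where f: "bij_betw f V V" and F: "e0 \<in> F" "F \<subseteq> edges2 V" "card F \<le> m"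
    and x: "x = wstar V f (indic V (edges2 V - F)) (indic V (edges2 V - {e0}))"
    by (auto simp: wstar_set_def edge_deletions_def)
  let ?F' = "F \<union> {e \<in> edges2 V. f ` e = e0}"
  have "card ?F' \<le> card F + card {e \<in> edges2 V. f ` e = e0}" by (rule card_Un_le)
  then have "card ?F' \<le> Suc m" using card_edges2_preimage_le_1[OF f, of e0] F(3) by linarith
  moreover have "x = indic V (edges2 V - ?F')" unfolding x by (rule wstar_indic_complements[OF f])
  ultimately show "x \<in> edge_deletions V e0 (Suc m)" using F by (auto simp: edge_deletions_def)
next
  fix x assume "x \<in> edge_deletions V e0 (Suc m)"
  then obtain F where F: "e0 \<in> F" "F \<subseteq> edges2 V" "card F \<le> Suc m" and x: "x = indic V (edges2 V - F)"
    by (auto simp: edge_deletions_def)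
  have fin: "finite F" using F(2) finite_edges2[OF assms(1)] by (rule finite_subset)
  \<comment> \<open>Split off one edge e of F, with F' the rest (or F itself if F = {e0}), and move e onto e0.\<close>
  obtain e F' where e: "e \<in> F" and F': "e0 \<in> F'" "F' \<subseteq> F" "card F' \<le> m" "insert e F' = F"
  proof (cases "F = {e0}")
    case True then show ?thesis using that[of e0 F] assms(3) by simp
  next
    case False
    then obtain e where e: "e \<in> F" "e \<noteq> e0" using F(1) by blast
    moreover have "card (F - {e}) \<le> m" using F(3) e(1) fin by (simp add: card_Diff_singleton)
    ultimately show ?thesis using F(1) by (intro that[of e "F - {e}"]) auto
  qed
  obtain f where f: "f permutes V" "f ` e = e0"
    using permutes_edges2_to_edge[OF _ assms(2), of e] e F(2) by blast
  have bij: "bij_betw f V V" using f(1) by (rule permutes_imp_bij)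
  have "{e' \<in> edges2 V. f ` e' = e0} = {e}"
    using e F(2) f(2) inj_image_eq_iff[OF permutes_inj[OF f(1)]] by auto
  then have "x = wstar V f (indic V (edges2 V - F')) (indic V (edges2 V - {e0}))"
    unfolding wstar_indic_complements[OF bij] x using F'(4) by simp
  moreover have "indic V (edges2 V - F') \<in> edge_deletions V e0 m"
    using F' F(2) by (auto simp: edge_deletions_def)
  ultimately show "x \<in> wstar_set V (edge_deletions V e0 m) {indic V (edges2 V - {e0})}"
    using bij by (auto simp: wstar_set_def)
qed

lemma wpow_edge_deletion:
  assumes "finite V" "e0 \<in> edges2 V"
  shows "wpow V {indic V (edges2 V - {e0})} m = edge_deletions V e0 (Suc m)"
proof (induction m)
  case 0 show ?case using edge_deletions_1[OF assms] by simp
next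
  case (Suc m) then show ?case using wstar_set_edge_deletions[OF assms, of "Suc m"] by simp
qed

lemma edge_deletions_saturate:
  assumes "finite V" "card (edges2 V) \<le> m"
  shows "edge_deletions V e0 m = edge_deletions V e0 (card (edges2 V))"
proof -
  have "card F \<le> card (edges2 V)" if "F \<subseteq> edges2 V" for F
    using finite_edges2[OF assms(1)] that by (rule card_mono)
  then show ?thesis using assms(2) unfolding edge_deletions_def by (meson order_trans)
qed

lemma wpow_inf_eqI:
  assumes "\<And>m. m \<ge> N \<Longrightarrow> wpow V X m = Y"
  shows "wpow_inf V X = Y"
  unfolding wpow_inf_def
proof (rule the_equality)
  show "\<exists>N'. Y = wpow V X N' \<and> (\<forall>m\<ge>N'. wpow V X m = wpow V X N')"
    using assms by (intro exI[of _ N]) simp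
next
  fix Y' assume "\<exists>N'. Y' = wpow V X N' \<and> (\<forall>m\<ge>N'. wpow V X m = wpow V X N')"
  then obtain N' where "Y' = wpow V X N'" "\<forall>m\<ge>N'. wpow V X m = wpow V X N'" by blast
  then have "Y' = wpow V X (max N N')" by (metis max.cobounded2)
  then show "Y' = Y" using assms by simp
qed

lemma wpow_inf_edge_deletion:
  assumes "finite V" "e0 \<in> edges2 V"
  shows "wpow_inf V {indic V (edges2 V - {e0})} = edge_deletions V e0 (card (edges2 V))"
proof (rule wpow_inf_eqI)
  fix m assume "card (edges2 V) \<le> m"
  then have "card (edges2 V) \<le> Suc m" by simp
  then show "wpow V {indic V (edges2 V - {e0})} m = edge_deletions V e0 (card (edges2 V))"
    unfolding wpow_edge_deletion[OF assms] by (rule edge_deletions_saturate[OF assms(1)])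
qed

lemma Wk_values:
  assumes "A \<subseteq> range (indic V)" "W \<in> Wk V A j" "e \<in> edges2 V"
  shows "W e \<in> {1..int j + 1}"
  using assms(2)
proof (induction j arbitrary: W)
  case 0
  then show ?case using assms(3) by (simp add: indic_def)
next
  case (Suc j)
  then obtain G W' where W: "W = (\<lambda>e. G e + W' e)" and "G \<in> A" and "W' \<in> Wk V A j"
    by (auto simp: wplus_set_def)
  moreover obtain S where "G = indic V S" using \<open>G \<in> A\<close> assms(1) by blast
  then have "G e \<in> {0, 1}" by (simp add: indic_def)
  moreover have "W' e \<in> {1..int j + 1}" using Suc.IH \<open>W' \<in> Wk V A j\<close> .
  ultimately show ?case by auto
qed

lemma in_WkI:
  assumes "finite V" "e0 \<in> edges2 V" "edge_deletions V e0 (card (edges2 V)) \<subseteq> A"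
    and "\<forall>e \<in> edges2 V. T e \<in> {1..int j + 1}" "\<forall>e. e \<notin> edges2 V \<longrightarrow> T e = 0" "T e0 = 1"
  shows "T \<in> Wk V A j"
  using assms(4-6)
proof (induction j arbitrary: T)
  case 0
  then have "T = indic V (edges2 V)" by (auto simp: indic_def)
  then show ?case by simp
next
  case (Suc j)
  \<comment> \<open>Peel off the top layer: the edges of weight j + 2 form a deletion graph avoiding e0.\<close>
  define F where "F = {e \<in> edges2 V. T e \<le> int j + 1}"
  define T' where "T' = (\<lambda>e. min (T e) (int j + 1))"
  have "F \<subseteq> edges2 V" "e0 \<in> F" using assms(2) Suc.prems(3) by (auto simp: F_def)
  then have "indic V (edges2 V - F) \<in> A"
    using assms(3) card_mono[OF finite_edges2[OF assms(1)]] by (auto simp: edge_deletions_def)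
  moreover have "T' \<in> Wk V A j" using Suc.prems by (intro Suc.IH) (auto simp: T'_def)
  moreover have "T = (\<lambda>e. indic V (edges2 V - F) e + T' e)"
    using Suc.prems by (force simp: F_def T'_def indic_def)
  ultimately show ?case by (auto simp: wplus_set_def)
qed

lemma bij_image_edges2_in_star_edges_iff:
  assumes "bij_betw f V V" "e \<in> edges2 V" "u \<in> V" "f u = c"
  shows "f ` e \<in> star_edges V c \<longleftrightarrow> u \<in> e"
proof -
  have inj: "inj_on f V" using assms(1) by (rule bij_betw_imp_inj_on)
  have eV: "e \<subseteq> V" using assms(2) by (simp add: edges2_def)
  have "u \<in> e" if "f ` e = {c, v}" for v
  proof -
    have "c \<in> f ` e" using that by simp
    then obtain x where x: "x \<in> e" "f x = f u" using assms(4) by auto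
    then have "x = u" using inj eV assms(3) by (auto dest: inj_onD)
    then show ?thesis using x(1) by simp
  qed
  moreover have "f ` e \<in> star_edges V c" if "u \<in> e"
  proof -
    obtain a b where ab: "e = {a, b}" "a \<noteq> b" using assms(2) by (auto simp: edges2_def card_2_iff)
    define w where "w = (if u = a then b else a)"
    have w: "e = {u, w}" "w \<noteq> u" using ab that by (auto simp: w_def)
    then have "f w \<noteq> c" "f w \<in> V"
      using w eV assms(3,4) inj_on_eq_iff[OF inj] bij_betw_apply[OF assms(1)] by auto
    then show ?thesis using w assms(4) unfolding star_edges_def by auto
  qed
  ultimately show ?thesis unfolding star_edges_def by blast
qed

lemma wsum_wstar_star_edges:
  assumes "finite V" "M \<subseteq> edges2 V" "bij_betw f V V" "u \<in> V" "f u = c"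
  shows "wsum V (wstar V f (indic V M) (indic V (star_edges V c))) = int (card {e \<in> M. u \<in> e})"
proof -
  have "wsum V (wstar V f (indic V M) (indic V (star_edges V c)))
      = (\<Sum>e\<in>edges2 V. if e \<in> {e \<in> M. u \<in> e} then 1 else 0)"
    unfolding wsum_def
  proof (rule sum.cong[OF refl])
    fix e assume e: "e \<in> edges2 V"
    with bij_betw_image_edges2[OF assms(3) e] bij_image_edges2_in_star_edges_iff[OF assms(3) e assms(4,5)]
    show "wstar V f (indic V M) (indic V (star_edges V c)) e = (if e \<in> {e \<in> M. u \<in> e} then 1 else 0)"
      by (simp add: wstar_def indic_def)
  qed
  also have "\<dots> = int (card {e \<in> M. u \<in> e})"
    using assms(2) by (simp add: sum.If_cases[OF finite_edges2[OF assms(1)]] Int_absorb1 subset_iff)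
  finally show ?thesis .
qed

lemma wsum_star_products:
  assumes "finite V" "M \<subseteq> edges2 V" "c \<in> V"
  shows "wsum V ` wstar_set V {indic V M} {indic V (star_edges V c)} = (\<lambda>u. int (card {e \<in> M. u \<in> e})) ` V"
proof (intro equalityI subsetI)
  fix x assume "x \<in> wsum V ` wstar_set V {indic V M} {indic V (star_edges V c)}"
  then obtain f where f: "bij_betw f V V" and x: "x = wsum V (wstar V f (indic V M) (indic V (star_edges V c)))"
    by (auto simp: wstar_set_def)
  obtain u where "u \<in> V" "f u = c" using assms(3) bij_betw_imp_surj_on[OF f] by (metis imageE)
  then show "x \<in> (\<lambda>u. int (card {e \<in> M. u \<in> e})) ` V"
    unfolding x wsum_wstar_star_edges[OF assms(1,2) f \<open>u \<in> V\<close> \<open>f u = c\<close>] by blast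
next
  fix x assume "x \<in> (\<lambda>u. int (card {e \<in> M. u \<in> e})) ` V"
  then obtain u where u: "u \<in> V" and x: "x = int (card {e \<in> M. u \<in> e})" by blast
  have f: "bij_betw (transpose u c) V V" using u assms(3) by (simp add: permutes_imp_bij permutes_swap_id)
  have "x = wsum V (wstar V (transpose u c) (indic V M) (indic V (star_edges V c)))"
    using wsum_wstar_star_edges[OF assms(1,2) f u] unfolding x by simp
  then show "x \<in> wsum V ` wstar_set V {indic V M} {indic V (star_edges V c)}"
    using f unfolding wstar_set_def by blast
qed

lemma star_products_le_1_iff_pairwise_disjnt:
  assumes "finite V" "M \<subseteq> edges2 V" "c \<in> V"
  shows "(\<forall>x \<in> wsum V ` wstar_set V {indic V M} {indic V (star_edges V c)}. x \<le> 1) \<longleftrightarrow> pairwise disjnt M"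
proof -
  have fin: "finite {e \<in> M. u \<in> e}" for u
    using finite_subset[OF assms(2) finite_edges2[OF assms(1)]] by simp
  have "card {e \<in> M. u \<in> e} \<le> 1 \<longleftrightarrow> (\<forall>e1\<in>M. \<forall>e2\<in>M. u \<in> e1 \<and> u \<in> e2 \<longrightarrow> e1 = e2)" for u
    using card_le_Suc0_iff_eq[OF fin[of u]] by auto
  moreover have "\<Union>M \<subseteq> V" using assms(2) by (auto simp: edges2_def)
  then have "(\<forall>u\<in>V. \<forall>e1\<in>M. \<forall>e2\<in>M. u \<in> e1 \<and> u \<in> e2 \<longrightarrow> e1 = e2) \<longleftrightarrow> pairwise disjnt M"
    unfolding pairwise_def disjnt_def by blast
  ultimately show ?thesis unfolding wsum_star_products[OF assms] by simp
qed

lemma proper_edge_colouring_iff_matchings: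
  "proper_edge_colouring E k col \<longleftrightarrow>
     (\<forall>e\<in>E. col e \<in> {1..k}) \<and> (\<forall>a\<in>{1..k}. pairwise disjnt {e \<in> E. col e = a})"
  unfolding proper_edge_colouring_def pairwise_def disjnt_def by blast

lemma proper_edge_colouring_permute:
  assumes "proper_edge_colouring E k col" "\<sigma> permutes {1..k}"
  shows "proper_edge_colouring E k (\<sigma> \<circ> col)"
  using assms(1) permutes_in_image[OF assms(2)] inj_eq[OF permutes_inj[OF assms(2)]]
  unfolding proper_edge_colouring_def by simp

lemma proper_edge_colouring_normalise:
  assumes "proper_edge_colouring E k col"
  obtains col' where "proper_edge_colouring E k col'" "e \<in> E \<Longrightarrow> col' e = 1"
proof (cases "e \<in> E")
  case True
  then have "col e \<in> {1..k}" using assms unfolding proper_edge_colouring_def by blast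
  then have "transpose 1 (col e) permutes {1..k}" by (intro permutes_swap_id) auto
  from proper_edge_colouring_permute[OF assms this] show ?thesis
    by (rule that) simp
next
  case False
  with assms show ?thesis by (intro that) simp_all
qed

definition colour_weights :: "'a set set \<Rightarrow> ('a set \<Rightarrow> nat) \<Rightarrow> 'a wgraph" where
  "colour_weights E col = (\<lambda>e. if e \<in> E then int (col e) else 0)"

lemma U_colour_weights:
  assumes "E \<subseteq> edges2 V" "a \<ge> 1"
  shows "U V (int a) (colour_weights E col) = {e \<in> E. col e = a}"
  using assms by (auto simp: U_def colour_weights_def)

lemma colour_weights_in_wstar_set_Wk:
  assumes "finite V" "e0 \<in> edges2 V" "edge_deletions V e0 (card (edges2 V)) \<subseteq> A" "E \<subseteq> edges2 V"
    and "\<forall>e\<in>E. col e \<in> {1..j + 1}" "e0 \<in> E \<Longrightarrow> col e0 = 1"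
  shows "colour_weights E col \<in> wstar_set V {indic V E} (Wk V A j)"
proof -
  \<comment> \<open>Edges outside E get weight 1, so that e0 always has weight 1.\<close>
  define T where "T = (\<lambda>e. if e \<in> E then int (col e) else if e \<in> edges2 V then 1 else 0)"
  have "T \<in> Wk V A j"
    using assms(2,4-6) by (intro in_WkI[OF assms(1-3)]) (auto simp: T_def)
  moreover have "colour_weights E col = wstar V id (indic V E) T"
    using assms(4) by (auto simp: colour_weights_def wstar_def indic_def T_def fun_eq_iff)
  ultimately show ?thesis unfolding wstar_set_def by blast
qed

lemma wstar_set_Wk_colour_weights:
  assumes "A \<subseteq> range (indic V)" "E \<subseteq> edges2 V" "H \<in> wstar_set V {indic V E} (Wk V A j)"
  obtains col where "H = colour_weights E col" "\<forall>e\<in>E. col e \<in> {1..j + 1}"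
proof -
  obtain f W where H: "H = wstar V f (indic V E) W" and W: "W \<in> Wk V A j" and f: "bij_betw f V V"
    using assms(3) unfolding wstar_set_def by blast
  have "H e \<in> {1..int j + 1}" if "e \<in> E" for e
    using that assms(2) Wk_values[OF assms(1) W bij_betw_image_edges2[OF f]]
    by (auto simp: H wstar_def indic_def)
  moreover have "H e = 0" if "e \<notin> E" for e
    using that by (simp add: H wstar_def indic_def)
  ultimately have "H = colour_weights E (\<lambda>e. nat (H e))" "\<forall>e\<in>E. nat (H e) \<in> {1..j + 1}"
    by (force simp: colour_weights_def)+
  then show ?thesis by (rule that)
qed

definition star_sums_bounded :: "'a set \<Rightarrow> 'a \<Rightarrow> nat \<Rightarrow> 'a wgraph \<Rightarrow> bool" where
  "star_sums_bounded V c k H \<longleftrightarrow>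
     (\<forall>a \<in> {1..int k}. \<forall>x \<in> wsum V ` wstar_set V {indic V (U V a H)} {indic V (star_edges V c)}. x \<le> 1)"

lemma star_sums_bounded_colour_weights_iff:
  assumes "finite V" "E \<subseteq> edges2 V" "c \<in> V"
  shows "star_sums_bounded V c k (colour_weights E col) \<longleftrightarrow> (\<forall>a \<in> {1..k}. pairwise disjnt {e \<in> E. col e = a})"
proof -
  have int_range: "(\<forall>a \<in> {1..int k}. P a) \<longleftrightarrow> (\<forall>a \<in> {1..k}. P (int a))" for P
  proof
    assume "\<forall>a \<in> {1..k}. P (int a)"
    moreover have "nat a \<in> {1..k}" "int (nat a) = a" if "a \<in> {1..int k}" for a
      using that by auto
    ultimately show "\<forall>a \<in> {1..int k}. P a" by metis
  qed auto
  show ?thesis unfolding star_sums_bounded_def int_range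
  proof (intro ball_cong refl)
    fix a assume "a \<in> {1..k}"
    then have "U V (int a) (colour_weights E col) = {e \<in> E. col e = a}"
      using assms(2) by (intro U_colour_weights) auto
    moreover have "{e \<in> E. col e = a} \<subseteq> edges2 V" using assms(2) by blast
    ultimately show "(\<forall>x \<in> wsum V ` wstar_set V {indic V (U V (int a) (colour_weights E col))}
                                              {indic V (star_edges V c)}. x \<le> 1)
        \<longleftrightarrow> pairwise disjnt {e \<in> E. col e = a}"
      using star_products_le_1_iff_pairwise_disjnt[OF assms(1) _ assms(3)] by simp
  qed
qed

theorem mainTheorem9:
  fixes V :: "'a set" and E :: "'a set set" and k :: nat and e0 :: "'a set" and c :: 'a
  assumes "finite V" and "card V \<ge> 2"
    and "E \<subseteq> edges2 V"
    and "k \<ge> 1"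
    and "e0 \<in> edges2 V"
    and "c \<in> V"
  shows "(\<exists>col. proper_edge_colouring E k col) \<longleftrightarrow>
    (let A = wpow_inf V {indic V (edges2 V - {e0})} \<union> {indic V (edges2 V)}
     in \<exists>H \<in> wstar_set V {indic V E} (Wk V A (k - 1)).
          \<forall>a \<in> {1..int k}.
            \<forall>x \<in> wsum V ` wstar_set V {indic V (U V a H)} {indic V (star_edges V c)}. x \<le> 1)"
proof -
  have A: "wpow_inf V {indic V (edges2 V - {e0})} \<union> {indic V (edges2 V)}
      = edge_deletions V e0 (card (edges2 V)) \<union> {indic V (edges2 V)}" (is "_ = ?A")
    unfolding wpow_inf_edge_deletion[OF assms(1,5)] ..
  have A_indic: "?A \<subseteq> range (indic V)" by (auto simp: edge_deletions_def)
  have k: "k - 1 + 1 = k" using assms(4) by simp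
  note star_iff = star_sums_bounded_colour_weights_iff[OF assms(1,3,6)]
  show ?thesis unfolding Let_def A star_sums_bounded_def[symmetric]
  proof
    assume "\<exists>col. proper_edge_colouring E k col"
    then obtain col0 where "proper_edge_colouring E k col0" ..
    then obtain col where col: "proper_edge_colouring E k col" "e0 \<in> E \<Longrightarrow> col e0 = 1"
      by (rule proper_edge_colouring_normalise[where e = e0]) blast
    then have "colour_weights E col \<in> wstar_set V {indic V E} (Wk V ?A (k - 1))"
      using assms(3) by (intro colour_weights_in_wstar_set_Wk[OF assms(1,5)])
        (auto simp: k proper_edge_colouring_iff_matchings)
    moreover have "star_sums_bounded V c k (colour_weights E col)"
      using col(1) unfolding star_iff proper_edge_colouring_iff_matchings by blast
    ultimately show "\<exists>H \<in> wstar_set V {indic V E} (Wk V ?A (k - 1)). star_sums_bounded V c k H" by blast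
  next
    assume "\<exists>H \<in> wstar_set V {indic V E} (Wk V ?A (k - 1)). star_sums_bounded V c k H"
    then obtain H where H: "H \<in> wstar_set V {indic V E} (Wk V ?A (k - 1))"
      and star: "star_sums_bounded V c k H" ..
    obtain col where "H = colour_weights E col" "\<forall>e\<in>E. col e \<in> {1..k}"
      using wstar_set_Wk_colour_weights[OF A_indic assms(3) H] unfolding k .
    with star have "proper_edge_colouring E k col"
      unfolding proper_edge_colouring_iff_matchings star_iff[symmetric] by blast
    then show "\<exists>col. proper_edge_colouring E k col" by blast
  qed
qed

end
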